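(* Let $k\in\mathbb{N}$ and $(A,B,C)\in\mathsf{TCP}_d^k$. Then $M_{k-1}(B)$ and $M_{k-1}(C)$ are positive semidefinite.
   Context: For $v\in\mathbb{C}^d$, $\sigma(v)$ is the number of nonzero coordinates; $\odot$ is the entrywise product and $\bar v$ the entrywise conjugate. A triple $(A,B,C)$ of $d\times d$ complex matrices with equal diagonals lies in $\mathsf{TCP}_d^k$ if there are finitely many vectors $v_n,w_n\in\mathbb{C}^d$ with $\sigma(v_n\odot w_n)\le k$ for all $n$ and $A=\sum_n|v_n\odot\bar v_n\rangle\langle w_n\odot\bar w_n|$, $B=\sum_n|v_n\odot w_n\rangle\langle v_n\odot w_n|$, $C=\sum_n|v_n\odot\bar w_n\rangle\langle v_n\odot\bar w_n|$. For $X\in\mathcal{M}_d(\mathbb{C})$ and $m\ge0$, $M_m(X)$ has entries $M_m(X)_{ii}=m|X_{ii}|$ and $M_m(X)_{ij}=-|X_{ij}|$ for $i\ne j$. *)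

theory Defs
  imports "HOL-Analysis.Analysis" "HOL-Library.Complex_Order"
begin

text \<open>Vectors in C^d are \<open>complex ^ 'd\<close>, d x d matrices are \<open>complex ^ 'd ^ 'd\<close>
  (d = CARD('d), an arbitrary finite index type).\<close>

definition supp_size :: "complex ^ 'd \<Rightarrow> nat" where
  "supp_size v = card {i. v $ i \<noteq> 0}"

definition hadamard :: "complex ^ 'd \<Rightarrow> complex ^ 'd \<Rightarrow> complex ^ 'd" where
  "hadamard v w = (\<chi> i. v $ i * w $ i)"

definition vconj :: "complex ^ 'd \<Rightarrow> complex ^ 'd" where
  "vconj v = (\<chi> i. cnj (v $ i))"

definition ketbra :: "complex ^ 'd \<Rightarrow> complex ^ 'd \<Rightarrow> complex ^ 'd ^ 'd" where
  "ketbra u x = (\<chi> i j. u $ i * cnj (x $ j))"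

definition TCP :: "nat \<Rightarrow> (complex ^ 'd ^ 'd) \<times> (complex ^ 'd ^ 'd) \<times> (complex ^ 'd ^ 'd) \<Rightarrow> bool" where
  "TCP k ABC = (case ABC of (A, B, C) \<Rightarrow>
     (\<forall>i. A $ i $ i = B $ i $ i \<and> B $ i $ i = C $ i $ i) \<and>
     (\<exists>vws :: ((complex ^ 'd) \<times> (complex ^ 'd)) list.
        (\<forall>(v, w) \<in> set vws. supp_size (hadamard v w) \<le> k) \<and>
        A = sum_list (map (\<lambda>(v, w). ketbra (hadamard v (vconj v)) (hadamard w (vconj w))) vws) \<and>
        B = sum_list (map (\<lambda>(v, w). ketbra (hadamard v w) (hadamard v w)) vws) \<and>
        C = sum_list (map (\<lambda>(v, w). ketbra (hadamard v (vconj w)) (hadamard v (vconj w))) vws)))"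

definition Mmat :: "real \<Rightarrow> complex ^ 'd ^ 'd \<Rightarrow> complex ^ 'd ^ 'd" where
  "Mmat m X = (\<chi> i j. if i = j then complex_of_real (m * cmod (X $ i $ i))
                        else - complex_of_real (cmod (X $ i $ j)))"

text \<open>Positive semidefinite: x^* X x is a nonnegative real for all x
  (complex order from Complex_Order: 0 \<le> z iff z is real and nonnegative).\<close>
definition psd :: "complex ^ 'd ^ 'd \<Rightarrow> bool" where
  "psd X = (\<forall>x :: complex ^ 'd. 0 \<le> (\<Sum>i\<in>UNIV. \<Sum>j\<in>UNIV. cnj (x $ i) * X $ i $ j * x $ j))"

end

theory Submission
  imports Defs
begin

(* B and C are sums of rank-one terms u u^* where u has at most k nonzero entries. For Hermitian X,
   M_m(X) is real symmetric with nonpositive off-diagonal entries, so its quadratic form at x is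
   at least its value at |x| and it suffices to test nonnegative vectors y. For those,
   sum_ij |B_ij| y_i y_j <= sum_n (sum_i |u_n i| y_i)^2, and Cauchy-Schwarz over the at most k
   nonzero terms of each inner sum bounds this by k sum_i B_ii y_i^2. *)

lemma sum_squared_le_card_support_mult_sum_squares:
  fixes a :: "'i::finite \<Rightarrow> real"
  assumes "card {i. a i \<noteq> 0} \<le> k"
  shows "(\<Sum>i\<in>UNIV. a i)\<^sup>2 \<le> real k * (\<Sum>i\<in>UNIV. (a i)\<^sup>2)"
proof -
  let ?S = "{i. a i \<noteq> 0}"
  have "(\<Sum>i\<in>UNIV. a i)\<^sup>2 = (\<Sum>i\<in>?S. a i)\<^sup>2"
    by (simp add: sum.mono_neutral_right[of UNIV ?S])
  also have "\<dots> \<le> (\<Sum>i\<in>?S. (a i)\<^sup>2) * card ?S"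
    by (rule sum_squared_le_sum_of_squares)
  also have "\<dots> \<le> (\<Sum>i\<in>?S. (a i)\<^sup>2) * k"
    using assms by (intro mult_left_mono) (auto intro: sum_nonneg)
  also have "(\<Sum>i\<in>?S. (a i)\<^sup>2) = (\<Sum>i\<in>UNIV. (a i)\<^sup>2)"
    by (simp add: sum.mono_neutral_left[of UNIV ?S])
  finally show ?thesis
    by (simp add: mult.commute)
qed

lemma psd_of_real_symmetric_Z_matrix:
  fixes r :: "'d::finite \<Rightarrow> 'd \<Rightarrow> real"
  assumes symmetric: "\<And>i j. r j i = r i j"
    and off_diagonal_nonpos: "\<And>i j. i \<noteq> j \<Longrightarrow> r i j \<le> 0"
    and copositive: "\<And>y. (\<And>i. 0 \<le> y i) \<Longrightarrow> 0 \<le> (\<Sum>i\<in>UNIV. \<Sum>j\<in>UNIV. r i j * y i * y j)"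
  shows "psd (\<chi> i j. complex_of_real (r i j))"
  unfolding psd_def
proof
  fix x :: "complex ^ 'd"
  define q where "q = (\<Sum>i\<in>UNIV. \<Sum>j\<in>UNIV. cnj (x $ i) * (\<chi> i j. complex_of_real (r i j)) $ i $ j * x $ j)"
  define t where "t i j = Im (cnj (x $ i) * x $ j)" for i j
  have "Im q = (\<Sum>i\<in>UNIV. \<Sum>j\<in>UNIV. r i j * t i j)"
    by (simp add: q_def t_def Im_sum algebra_simps)
  also have "\<dots> = (\<Sum>i\<in>UNIV. \<Sum>j\<in>UNIV. r j i * t j i)"
    by (rule sum.swap)
  also have "\<dots> = - (\<Sum>i\<in>UNIV. \<Sum>j\<in>UNIV. r i j * t i j)"
    by (simp add: t_def symmetric sum_negf[symmetric] algebra_simps)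
  finally have Im_q: "Im q = 0"
    by (simp add: q_def t_def Im_sum algebra_simps)
  have termwise: "r i j * (cmod (x $ i) * cmod (x $ j)) \<le> r i j * Re (cnj (x $ i) * x $ j)" for i j
  proof (cases "i = j")
    case True
    then show ?thesis
      using cmod_power2[of "x $ i"] by (simp add: power2_eq_square)
  next
    case False
    have "Re (cnj (x $ i) * x $ j) \<le> cmod (x $ i) * cmod (x $ j)"
      using complex_Re_le_cmod[of "cnj (x $ i) * x $ j"] by (simp add: norm_mult)
    then show ?thesis
      by (rule mult_left_mono_neg[OF _ off_diagonal_nonpos[OF False]])
  qed
  have "0 \<le> (\<Sum>i\<in>UNIV. \<Sum>j\<in>UNIV. r i j * cmod (x $ i) * cmod (x $ j))"
    by (rule copositive) simp
  also have "\<dots> \<le> (\<Sum>i\<in>UNIV. \<Sum>j\<in>UNIV. r i j * Re (cnj (x $ i) * x $ j))"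
    using termwise by (intro sum_mono) (simp add: mult.assoc)
  also have "\<dots> = Re q"
    by (simp add: q_def Re_sum algebra_simps)
  finally show "0 \<le> q"
    using Im_q by (simp add: less_eq_complex_def)
qed

lemma psd_Mmat_if_copositive_bound:
  fixes X :: "complex ^ 'd ^ 'd"
  assumes hermitian_abs: "\<And>i j. cmod (X $ j $ i) = cmod (X $ i $ j)"
    and bound: "\<And>y. (\<And>i. 0 \<le> y i) \<Longrightarrow>
      (\<Sum>i\<in>UNIV. \<Sum>j\<in>UNIV. cmod (X $ i $ j) * y i * y j) \<le> c * (\<Sum>i\<in>UNIV. cmod (X $ i $ i) * (y i)\<^sup>2)"
  shows "psd (Mmat (c - 1) X)"
proof -
  define r where "r i j = (if i = j then (c - 1) * cmod (X $ i $ i) else - cmod (X $ i $ j))" for i j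
  have "Mmat (c - 1) X = (\<chi> i j. complex_of_real (r i j))"
    by (auto simp: Mmat_def r_def vec_eq_iff)
  moreover have "psd (\<chi> i j. complex_of_real (r i j))"
  proof (rule psd_of_real_symmetric_Z_matrix)
    fix y :: "'d \<Rightarrow> real"
    assume "\<And>i. 0 \<le> y i"
    have "r i j * y i * y j = (if i = j then c * cmod (X $ i $ i) * (y i)\<^sup>2 else 0)
        - cmod (X $ i $ j) * y i * y j" for i j
      by (simp add: r_def power2_eq_square algebra_simps)
    then have "(\<Sum>i\<in>UNIV. \<Sum>j\<in>UNIV. r i j * y i * y j) = c * (\<Sum>i\<in>UNIV. cmod (X $ i $ i) * (y i)\<^sup>2)
        - (\<Sum>i\<in>UNIV. \<Sum>j\<in>UNIV. cmod (X $ i $ j) * y i * y j)"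
      by (simp add: sum_subtractf sum_distrib_left mult.assoc)
    with bound[OF \<open>\<And>i. 0 \<le> y i\<close>] show "0 \<le> (\<Sum>i\<in>UNIV. \<Sum>j\<in>UNIV. r i j * y i * y j)"
      by simp
  qed (auto simp: r_def hermitian_abs)
  ultimately show ?thesis
    by simp
qed

lemma sum_ketbra_component:
  "(\<Sum>n\<in>I. ketbra (u n) (u n)) $ i $ j = (\<Sum>n\<in>I. u n $ i * cnj (u n $ j))"
  by (simp add: ketbra_def sum_component)

lemma sum_ketbra_component_swap:
  "(\<Sum>n\<in>I. ketbra (u n) (u n)) $ j $ i = cnj ((\<Sum>n\<in>I. ketbra (u n) (u n)) $ i $ j)"
  unfolding sum_ketbra_component by (simp add: mult.commute)

lemma Gram_sum_copositive_bound:
  fixes I :: "'a set" and u :: "'a \<Rightarrow> complex ^ 'd" and y :: "'d \<Rightarrow> real"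
  defines "B \<equiv> \<Sum>n\<in>I. ketbra (u n) (u n)"
  assumes supp: "\<And>n. n \<in> I \<Longrightarrow> supp_size (u n) \<le> k"
    and nonneg: "\<And>i. 0 \<le> y i"
  shows "(\<Sum>i\<in>UNIV. \<Sum>j\<in>UNIV. cmod (B $ i $ j) * y i * y j) \<le> real k * (\<Sum>i\<in>UNIV. cmod (B $ i $ i) * (y i)\<^sup>2)"
proof -
  define a where "a n i = cmod (u n $ i) * y i" for n i
  have diagonal: "cmod (B $ i $ i) = (\<Sum>n\<in>I. (cmod (u n $ i))\<^sup>2)" for i
  proof -
    have "B $ i $ i = complex_of_real (\<Sum>n\<in>I. (cmod (u n $ i))\<^sup>2)"
      unfolding B_def sum_ketbra_component of_real_sum by (intro sum.cong refl) (metis complex_norm_square of_real_power)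
    moreover have "0 \<le> (\<Sum>n\<in>I. (cmod (u n $ i))\<^sup>2)"
      by (simp add: sum_nonneg)
    ultimately show ?thesis
      by (simp only: norm_of_real abs_of_nonneg)
  qed
  have "(\<Sum>i\<in>UNIV. \<Sum>j\<in>UNIV. cmod (B $ i $ j) * y i * y j)
      \<le> (\<Sum>i\<in>UNIV. \<Sum>j\<in>UNIV. (\<Sum>n\<in>I. cmod (u n $ i) * cmod (u n $ j)) * y i * y j)"
  proof (intro sum_mono mult_right_mono nonneg)
    fix i j
    show "cmod (B $ i $ j) \<le> (\<Sum>n\<in>I. cmod (u n $ i) * cmod (u n $ j))"
      unfolding B_def sum_ketbra_component by (rule order_trans[OF norm_sum]) (simp add: norm_mult)
  qed
  also have "\<dots> = (\<Sum>n\<in>I. (\<Sum>i\<in>UNIV. a n i)\<^sup>2)"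
    by (simp add: a_def power2_eq_square sum_distrib_left sum_distrib_right sum.swap[of _ I] algebra_simps)
  also have "\<dots> \<le> (\<Sum>n\<in>I. real k * (\<Sum>i\<in>UNIV. (a n i)\<^sup>2))"
  proof (rule sum_mono)
    fix n assume "n \<in> I"
    have "card {i. a n i \<noteq> 0} \<le> card {i. u n $ i \<noteq> 0}"
      by (intro card_mono) (auto simp: a_def)
    also have "\<dots> \<le> k"
      using supp[OF \<open>n \<in> I\<close>] by (simp add: supp_size_def)
    finally show "(\<Sum>i\<in>UNIV. a n i)\<^sup>2 \<le> real k * (\<Sum>i\<in>UNIV. (a n i)\<^sup>2)"
      by (rule sum_squared_le_card_support_mult_sum_squares)
  qed
  also have "\<dots> = real k * (\<Sum>i\<in>UNIV. cmod (B $ i $ i) * (y i)\<^sup>2)"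
    by (simp add: a_def diagonal sum_distrib_left sum_distrib_right sum.swap[of _ I] power_mult_distrib algebra_simps)
  finally show ?thesis .
qed

lemma psd_Mmat_sum_ketbra_sparse:
  fixes us :: "(complex ^ 'd) list"
  assumes "\<And>u. u \<in> set us \<Longrightarrow> supp_size u \<le> k"
  shows "psd (Mmat (real k - 1) (sum_list (map (\<lambda>u. ketbra u u) us)))"
proof -
  let ?B = "\<Sum>n\<in>{0..<length us}. ketbra (us ! n) (us ! n)"
  have "psd (Mmat (real k - 1) ?B)"
  proof (rule psd_Mmat_if_copositive_bound)
    show "cmod (?B $ j $ i) = cmod (?B $ i $ j)" for i j
      unfolding sum_ketbra_component_swap[where i = i and j = j] by (rule complex_mod_cnj)
    show "(\<Sum>i\<in>UNIV. \<Sum>j\<in>UNIV. cmod (?B $ i $ j) * y i * y j) \<le> real k * (\<Sum>i\<in>UNIV. cmod (?B $ i $ i) * (y i)\<^sup>2)"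
      if "\<And>i. 0 \<le> y i" for y
      using that by (rule Gram_sum_copositive_bound[rotated]) (simp add: assms)
  qed
  moreover have "sum_list (map (\<lambda>u. ketbra u u) us) = ?B"
    by (simp add: sum_list_sum_nth)
  ultimately show ?thesis
    by (simp only:)
qed

lemma supp_size_hadamard_vconj: "supp_size (hadamard v (vconj w)) = supp_size (hadamard v w)"
  by (simp add: supp_size_def hadamard_def vconj_def)

theorem proposition3p12:
  fixes A B C :: "complex ^ 'd ^ 'd" and k :: nat
  assumes "TCP k (A, B, C)"
  shows "psd (Mmat (real k - 1) B) \<and> psd (Mmat (real k - 1) C)"
proof -
  obtain vws :: "((complex ^ 'd) \<times> (complex ^ 'd)) list" where
    supp: "\<forall>(v, w) \<in> set vws. supp_size (hadamard v w) \<le> k" and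
    B: "B = sum_list (map (\<lambda>(v, w). ketbra (hadamard v w) (hadamard v w)) vws)" and
    C: "C = sum_list (map (\<lambda>(v, w). ketbra (hadamard v (vconj w)) (hadamard v (vconj w))) vws)"
    using assms unfolding TCP_def by auto
  have B_Gram: "B = sum_list (map (\<lambda>u. ketbra u u) (map (\<lambda>(v, w). hadamard v w) vws))"
    unfolding B map_map by (intro arg_cong[where f = sum_list] map_cong) auto
  have C_Gram: "C = sum_list (map (\<lambda>u. ketbra u u) (map (\<lambda>(v, w). hadamard v (vconj w)) vws))"
    unfolding C map_map by (intro arg_cong[where f = sum_list] map_cong) auto
  show ?thesis
    unfolding B_Gram C_Gram
    using supp by (intro conjI psd_Mmat_sum_ketbra_sparse) (auto simp: supp_size_hadamard_vconj)
qed

end
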